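(* Let $F:\mathbb{R}^n\to\mathbb{R}$ be convex and $h:\mathbb{R}^n\to\mathbb{R}^p$ with $-h$ convex, both continuous, let $\emptyset\ne I\subseteq\{1,\dots,n\}$, and consider the convex binary MINLP $\min\{F(x): h(x)\ge 0,\ x_i\in\{0,1\}\text{ for } i\in I\}$, where $\{x: h(x)\ge 0\}$ is nonempty and compact. Let $X:=\{x\in\mathbb{R}^n: h(x)\ge 0,\ x_I\in[0,1]^I\}$, $Y:=\{0,1\}^I$ and $$\min_{x,y}\ \|x_I-y\|_1 \quad\text{s.t.}\quad x\in X,\ y\in Y. \qquad (\ast)$$ The idealized feasibility pump for this convex MINLP (starting from a solution $x^0$ of the continuous relaxation and $y^0$ the rounding of $x^0_I$, alternately computing $x^{k+1}\in\arg\min_{x\in X}\|x_I-y^k\|_1$ as a global minimizer and $y^{k+1}\in\arg\min_{y\in Y}\|x^{k+1}_I-y\|_1$ as the rounding of $x^{k+1}_I$ with ties broken lexicographically minimally, without random perturbations, and stopping as soon as the iterate is a partial minimum of $(\ast)$) is the alternating direction method applied to $(\ast)$. It terminates at a partial minimum $(x^*,y^* )$ of $(\ast)$ after a finite number of iterations. If this partial minimum has objective value $\|x^*_I-y^*\|_1=0$, then $(x^*,y^* )$ is feasible for the convex MINLP (i.e., $x^*$ is feasible for it).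
   Context: A point $(x^*,y^* )\in X\times Y$ is a partial minimum of $(\ast)$ if $\|x^*_I-y^*\|_1\le\|x_I-y^*\|_1$ for all $x\in X$ and $\|x^*_I-y^*\|_1\le \|x^*_I-y\|_1$ for all $y\in Y$. $x_I$ denotes the subvector of $x$ with components indexed by $I$. *)

theory Defs
  imports "HOL-Analysis.Analysis"
begin

definition feas_h :: "(real^'n \<Rightarrow> real^'p) \<Rightarrow> (real^'n) set" where
  "feas_h h = {x. \<forall>j. h x $ j \<ge> 0}"

definition setX :: "(real^'n \<Rightarrow> real^'p) \<Rightarrow> 'n set \<Rightarrow> (real^'n) set" where
  "setX h I = {x. (\<forall>j. h x $ j \<ge> 0) \<and> (\<forall>i\<in>I. 0 \<le> x $ i \<and> x $ i \<le> 1)}"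

text \<open>Y := {0,1}^I, represented by vectors in real^'n whose components in I are 0 or 1
  and whose components outside I are 0 (only the I-components matter).\<close>
definition setY :: "'n set \<Rightarrow> (real^'n) set" where
  "setY I = {y. (\<forall>i\<in>I. y $ i = 0 \<or> y $ i = 1) \<and> (\<forall>i. i \<notin> I \<longrightarrow> y $ i = 0)}"

definition distI :: "'n set \<Rightarrow> real^'n \<Rightarrow> real^'n \<Rightarrow> real" where
  "distI I x y = (\<Sum>i\<in>I. \<bar>x $ i - y $ i\<bar>)"

definition partial_min ::
  "(real^'n \<Rightarrow> real^'p) \<Rightarrow> 'n set \<Rightarrow> real^'n \<Rightarrow> real^'n \<Rightarrow> bool" where
  "partial_min h I xs ys \<longleftrightarrow> xs \<in> setX h I \<and> ys \<in> setY I \<and>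
     (\<forall>x\<in>setX h I. distI I xs ys \<le> distI I x ys) \<and>
     (\<forall>y\<in>setY I. distI I xs ys \<le> distI I xs y)"

text \<open>Rounding of x_I with ties (value 1/2) broken lexicographically minimally, i.e. to 0.\<close>
definition rnd :: "'n set \<Rightarrow> real^'n \<Rightarrow> real^'n" where
  "rnd I x = (\<chi> i. if i \<in> I \<and> x $ i > 1/2 then 1 else 0)"

text \<open>A run of the idealized feasibility pump (stopped at the first partial minimum;
  after stopping the sequences are unconstrained).\<close>
definition fp_run ::
  "(real^'n \<Rightarrow> real) \<Rightarrow> (real^'n \<Rightarrow> real^'p) \<Rightarrow> 'n set \<Rightarrow>
   (nat \<Rightarrow> real^'n) \<Rightarrow> (nat \<Rightarrow> real^'n) \<Rightarrow> bool" where
  "fp_run F h I xs ys \<longleftrightarrow>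
     xs 0 \<in> setX h I \<and> (\<forall>x\<in>setX h I. F (xs 0) \<le> F x) \<and>
     ys 0 = rnd I (xs 0) \<and>
     (\<forall>k. (\<forall>k'\<le>k. \<not> partial_min h I (xs k') (ys k')) \<longrightarrow>
          xs (Suc k) \<in> setX h I \<and>
          (\<forall>x\<in>setX h I. distI I (xs (Suc k)) (ys k) \<le> distI I x (ys k)) \<and>
          ys (Suc k) = rnd I (xs (Suc k)))"

end

theory Submission
  imports Defs
begin

text \<open>The alternating direction method on \<open>(\<ast>)\<close> can only fail to stop if the optimal value
  of the \<open>x\<close>-step strictly decreases along the run.  Since that value is determined by the
  current \<open>y\<close>-iterate, the \<open>y\<close>-iterates would then be pairwise distinct, which is impossible
  because \<open>Y = {0,1}\<^sup>I\<close> is finite.  A partial minimum with value 0 has \<open>x\<^sub>I = y \<in> {0,1}\<^sup>I\<close>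
  and \<open>x \<in> X\<close>, so it is feasible.\<close>

lemma alternating_minimization_reaches_partial_min:
  fixes f :: "'x \<Rightarrow> 'y \<Rightarrow> real"
  assumes "finite Y"
    and ys_in: "\<And>k. ys k \<in> Y"
    and xs_in: "\<And>k. xs k \<in> X"
    and y_step: "\<And>k y. y \<in> Y \<Longrightarrow> f (xs k) (ys k) \<le> f (xs k) y"
    and x_step: "\<And>k x. x \<in> X \<Longrightarrow> f (xs (Suc k)) (ys k) \<le> f x (ys k)"
  shows "\<exists>k. \<forall>x\<in>X. f (xs k) (ys k) \<le> f x (ys k)"
proof (rule ccontr)
  assume "\<not> ?thesis"
  then have not_opt: "\<exists>x\<in>X. f x (ys k) < f (xs k) (ys k)" for k
    by (meson not_le)
  define g where "g k = f (xs (Suc k)) (ys k)" for k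
  have "g (Suc k) < g k" for k
  proof -
    obtain x where "x \<in> X" "f x (ys (Suc k)) < f (xs (Suc k)) (ys (Suc k))"
      using not_opt by blast
    then have "g (Suc k) < f (xs (Suc k)) (ys (Suc k))"
      unfolding g_def using x_step by (meson le_less_trans)
    also have "\<dots> \<le> g k"
      unfolding g_def using y_step ys_in by blast
    finally show ?thesis .
  qed
  then have "strict_mono (\<lambda>k. - g k)"
    by (intro strict_monoI_Suc) simp
  then have "inj g"
    by (metis inj_def neg_equal_iff_equal strict_mono_eq)
  moreover have "g i = g j" if "ys i = ys j" for i j
    using x_step[of "xs (Suc i)" j] x_step[of "xs (Suc j)" i] xs_in that
    unfolding g_def by fastforce
  ultimately have "inj ys"
    by (metis injD injI)
  then have "finite (UNIV :: nat set)"
    using ys_in \<open>finite Y\<close> by (metis finite_imageD finite_subset image_subsetI)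
  then show False
    by simp
qed

lemma finite_setY: "finite (setY (I :: 'n::finite set))"
proof -
  have "setY I \<subseteq> vec_lambda ` (UNIV \<rightarrow>\<^sub>E {0, 1})"
  proof
    fix y assume "y \<in> setY I"
    then have "vec_nth y \<in> UNIV \<rightarrow>\<^sub>E {0, 1}"
      unfolding setY_def by auto
    then show "y \<in> vec_lambda ` (UNIV \<rightarrow>\<^sub>E {0, 1})"
      by (metis image_eqI vector_component_simps(5) vec_nth_inverse)
  qed
  then show ?thesis
    by (rule finite_subset) (simp add: finite_PiE)
qed

lemma rnd_in_setY: "rnd I x \<in> setY I"
  unfolding rnd_def setY_def by auto

lemma rnd_minimizes_distI: "y \<in> setY I \<Longrightarrow> distI I x (rnd I x) \<le> distI I x y"
  unfolding distI_def
proof (rule sum_mono)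
  fix i assume "y \<in> setY I" "i \<in> I"
  then have "y $ i = 0 \<or> y $ i = 1"
    unfolding setY_def by auto
  then show "\<bar>x $ i - rnd I x $ i\<bar> \<le> \<bar>x $ i - y $ i\<bar>"
    using \<open>i \<in> I\<close> unfolding rnd_def by auto
qed

lemma fp_run_reaches_partial_min:
  assumes "fp_run F h I xs ys"
  shows "\<exists>K. partial_min h I (xs K) (ys K)"
proof (rule ccontr)
  assume "\<not> ?thesis"
  then have step: "xs (Suc k) \<in> setX h I \<and>
      (\<forall>x\<in>setX h I. distI I (xs (Suc k)) (ys k) \<le> distI I x (ys k)) \<and>
      ys (Suc k) = rnd I (xs (Suc k))" for k
    using assms unfolding fp_run_def by blast
  have xs_in: "xs k \<in> setX h I" and ys_rnd: "ys k = rnd I (xs k)" for k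
    using assms step by (cases k; auto simp: fp_run_def)+
  have y_opt: "\<forall>y\<in>setY I. distI I (xs k) (ys k) \<le> distI I (xs k) y" for k
    using ys_rnd rnd_minimizes_distI by metis
  obtain k where "\<forall>x\<in>setX h I. distI I (xs k) (ys k) \<le> distI I x (ys k)"
    using alternating_minimization_reaches_partial_min[OF finite_setY, of ys I xs "setX h I"]
      rnd_in_setY ys_rnd xs_in y_opt step by metis
  then have "partial_min h I (xs k) (ys k)"
    unfolding partial_min_def using xs_in ys_rnd rnd_in_setY y_opt by metis
  with \<open>\<not> ?thesis\<close> show False
    by blast
qed

lemma distI_zero_imp_feasible:
  assumes "x \<in> setX h I" and "y \<in> setY I" and "distI I x y = 0"
  shows "(\<forall>j. h x $ j \<ge> 0) \<and> (\<forall>i\<in>I. x $ i = 0 \<or> x $ i = 1)"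
proof -
  have "\<forall>i\<in>I. x $ i = y $ i"
    using assms(3) unfolding distI_def by (subst (asm) sum_nonneg_eq_0_iff) auto
  then show ?thesis
    using assms(1,2) unfolding setX_def setY_def by auto
qed

theorem mainTheorem3:
  fixes F :: "real^'n \<Rightarrow> real" and h :: "real^'n \<Rightarrow> real^'p" and I :: "'n set"
    and xs ys :: "nat \<Rightarrow> real^'n"
  assumes "convex_on UNIV F" and "continuous_on UNIV F"
    and "\<forall>j. convex_on UNIV (\<lambda>x. - (h x $ j))" and "continuous_on UNIV h"
    and "I \<noteq> {}"
    and "feas_h h \<noteq> {}" and "compact (feas_h h)"
    and "fp_run F h I xs ys"
  shows "(\<forall>x. rnd I x \<in> setY I \<and> (\<forall>y\<in>setY I. distI I x (rnd I x) \<le> distI I x y))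
    \<and> (\<exists>K. partial_min h I (xs K) (ys K) \<and> (\<forall>k<K. \<not> partial_min h I (xs k) (ys k))
          \<and> (distI I (xs K) (ys K) = 0 \<longrightarrow>
               (\<forall>j. h (xs K) $ j \<ge> 0) \<and> (\<forall>i\<in>I. xs K $ i = 0 \<or> xs K $ i = 1)))"
proof -
  define K where "K = (LEAST K. partial_min h I (xs K) (ys K))"
  have stop: "partial_min h I (xs K) (ys K)"
    unfolding K_def using fp_run_reaches_partial_min[OF assms(8)] by (rule LeastI_ex)
  moreover have "\<forall>k<K. \<not> partial_min h I (xs k) (ys k)"
    unfolding K_def using not_less_Least by blast
  moreover have "distI I (xs K) (ys K) = 0 \<longrightarrow>
      (\<forall>j. h (xs K) $ j \<ge> 0) \<and> (\<forall>i\<in>I. xs K $ i = 0 \<or> xs K $ i = 1)"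
    using stop distI_zero_imp_feasible unfolding partial_min_def by blast
  ultimately show ?thesis
    using rnd_in_setY rnd_minimizes_distI by blast
qed

end
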